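(* Let $h,n\geq2$ and let $U,V\leq G$ be such that $\langle U,V\rangle$ is regular. (i) If $p^U\subseteq p^V$ for every $p\in\mathcal{P}$, then $\mathcal{F}^V\subseteq\mathcal{F}^U$. (ii) If $p^U=p^V$ for every $p\in\mathcal{P}$, then $\mathcal{F}^V=\mathcal{F}^U$.
   Context: Permutations compose as $(\sigma\tau)(x)=\sigma(\tau(x))$. Let $G=S_h\times S_n$ and $\mathcal{P}=(S_n)^h$ (preference profiles), with $G$ acting by $(p^{(\varphi,\psi)})_i=\psi\,p_{\varphi^{-1}(i)}$; for $U\leq G$, $p^U=\{p^g:g\in U\}$. $U\leq G$ is regular if for every $p\in\mathcal{P}$, $\{g\in U:p^g=p\}\subseteq S_h\times\{id\}$. A social preference function is any $F:\mathcal{P}\to S_n$; $\mathcal{F}^U$ denotes the set of $U$-symmetric ones, i.e. those with $F(p^{(\varphi,\psi)})=\psi F(p)$ for all $p\in\mathcal{P}$, $(\varphi,\psi)\in U$. *)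

theory Defs
  imports "HOL-Algebra.Algebra" "HOL-Combinatorics.Permutations"
begin

text \<open>Permutations of {1..k} are modelled as permutations of {0..<k}, i.e. functions
  nat \<Rightarrow> nat that permute {..<k} (identity outside). Composition is function composition.\<close>

definition Sym :: "nat \<Rightarrow> (nat \<Rightarrow> nat) set" where
  "Sym k = {\<sigma>. \<sigma> permutes {..<k}}"

definition Ggrp :: "nat \<Rightarrow> nat \<Rightarrow> ((nat \<Rightarrow> nat) \<times> (nat \<Rightarrow> nat)) monoid" where
  "Ggrp h n = \<lparr> carrier = Sym h \<times> Sym n,
                monoid.mult = (\<lambda>(\<phi>1, \<psi>1) (\<phi>2, \<psi>2). (\<phi>1 \<circ> \<phi>2, \<psi>1 \<circ> \<psi>2)),
                one = (id, id) \<rparr>"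

text \<open>Preference profiles (S_n)^h: voter i < h gets p i; extended by id outside.\<close>
definition profiles :: "nat \<Rightarrow> nat \<Rightarrow> (nat \<Rightarrow> nat \<Rightarrow> nat) set" where
  "profiles h n = {p. (\<forall>i<h. p i \<in> Sym n) \<and> (\<forall>i\<ge>h. p i = id)}"

definition act :: "nat \<Rightarrow> (nat \<Rightarrow> nat) \<times> (nat \<Rightarrow> nat) \<Rightarrow> (nat \<Rightarrow> nat \<Rightarrow> nat) \<Rightarrow> (nat \<Rightarrow> nat \<Rightarrow> nat)" where
  "act h g p = (\<lambda>i. if i < h then snd g \<circ> p (Hilbert_Choice.inv (fst g) i) else id)"

definition orbit_under :: "nat \<Rightarrow> ((nat \<Rightarrow> nat) \<times> (nat \<Rightarrow> nat)) set \<Rightarrow> (nat \<Rightarrow> nat \<Rightarrow> nat) \<Rightarrow> (nat \<Rightarrow> nat \<Rightarrow> nat) set" where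
  "orbit_under h U p = (\<lambda>g. act h g p) ` U"

definition regular :: "nat \<Rightarrow> nat \<Rightarrow> ((nat \<Rightarrow> nat) \<times> (nat \<Rightarrow> nat)) set \<Rightarrow> bool" where
  "regular h n U \<longleftrightarrow> (\<forall>p\<in>profiles h n. {g\<in>U. act h g p = p} \<subseteq> Sym h \<times> {id})"

text \<open>U-symmetric social preference functions F : P -> S_n (values outside P irrelevant,
  so we take F extensional on P).\<close>
definition symF :: "nat \<Rightarrow> nat \<Rightarrow> ((nat \<Rightarrow> nat) \<times> (nat \<Rightarrow> nat)) set \<Rightarrow> ((nat \<Rightarrow> nat \<Rightarrow> nat) \<Rightarrow> (nat \<Rightarrow> nat)) set" where
  "symF h n U = {F. F \<in> extensional (profiles h n) \<and> (\<forall>p\<in>profiles h n. F p \<in> Sym n) \<and>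
      (\<forall>p\<in>profiles h n. \<forall>g\<in>U. F (act h g p) = snd g \<circ> F p)}"

end

theory Submission
  imports Defs
begin

text \<open>If \<open>u \<in> U\<close> and \<open>v \<in> V\<close> send a profile \<open>p\<close> to the same profile, then \<open>v\<inverse>u\<close> fixes \<open>p\<close> and
  lies in \<open>\<langle>U, V\<rangle>\<close>; by regularity it acts trivially on the alternatives, so \<open>u\<close> and \<open>v\<close> have the
  same \<open>S\<^sub>n\<close>-component. Hence a \<open>V\<close>-symmetric \<open>F\<close> satisfies \<open>F(p\<^sup>u) = F(p\<^sup>v) = \<psi>\<^sub>v F(p) = \<psi>\<^sub>u F(p)\<close>,
  which is (i); (ii) is (i) applied in both directions.\<close>

lemma snd_Ggrp_mult: "snd (x \<otimes>\<^bsub>Ggrp h n\<^esub> y) = snd x \<circ> snd y"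
  by (simp add: Ggrp_def split: prod.splits)

lemma group_Ggrp: "group (Ggrp h n)"
proof (rule groupI)
  fix x assume "x \<in> carrier (Ggrp h n)"
  then obtain a b where x: "x = (a, b)" "a permutes {..<h}" "b permutes {..<n}"
    by (auto simp: Ggrp_def Sym_def)
  show "\<exists>y\<in>carrier (Ggrp h n). y \<otimes>\<^bsub>Ggrp h n\<^esub> x = \<one>\<^bsub>Ggrp h n\<^esub>"
  proof
    show "(Hilbert_Choice.inv a, Hilbert_Choice.inv b) \<otimes>\<^bsub>Ggrp h n\<^esub> x = \<one>\<^bsub>Ggrp h n\<^esub>"
      using x by (simp add: Ggrp_def permutes_inv_o)
    show "(Hilbert_Choice.inv a, Hilbert_Choice.inv b) \<in> carrier (Ggrp h n)"
      using x by (simp add: Ggrp_def Sym_def permutes_inv)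
  qed
qed (auto simp: Ggrp_def Sym_def permutes_compose o_assoc split: prod.splits)

lemma act_one: "p \<in> profiles h n \<Longrightarrow> act h \<one>\<^bsub>Ggrp h n\<^esub> p = p"
  by (auto simp: act_def Ggrp_def profiles_def fun_eq_iff)

lemma act_mult:
  assumes "g1 \<in> carrier (Ggrp h n)" "g2 \<in> carrier (Ggrp h n)"
  shows "act h (g1 \<otimes>\<^bsub>Ggrp h n\<^esub> g2) p = act h g1 (act h g2 p)"
proof -
  obtain a b where g1: "g1 = (a, b)" "a permutes {..<h}"
    using assms by (auto simp: Ggrp_def Sym_def)
  obtain c d where g2: "g2 = (c, d)" "c permutes {..<h}"
    using assms by (auto simp: Ggrp_def Sym_def)
  have "Hilbert_Choice.inv (a \<circ> c) = Hilbert_Choice.inv c \<circ> Hilbert_Choice.inv a"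
    using g1 g2 by (simp add: o_inv_distrib permutes_bij)
  moreover have "\<And>i. i < h \<Longrightarrow> Hilbert_Choice.inv a i < h"
    using permutes_in_image[OF permutes_inv[OF g1(2)]] by auto
  ultimately show ?thesis
    using g1 g2 by (auto simp: act_def Ggrp_def fun_eq_iff)
qed

lemma regular_act_eq_imp_snd_eq:
  assumes W: "subgroup W (Ggrp h n)" and reg: "regular h n W"
    and p: "p \<in> profiles h n" and g: "g \<in> W" and g': "g' \<in> W"
    and eq: "act h g p = act h g' p"
  shows "snd g = snd g'"
proof -
  interpret group "Ggrp h n" by (rule group_Ggrp)
  let ?k = "inv\<^bsub>Ggrp h n\<^esub> g' \<otimes>\<^bsub>Ggrp h n\<^esub> g"
  have gc: "g \<in> carrier (Ggrp h n)" and g'c: "g' \<in> carrier (Ggrp h n)"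
    using W g g' subgroup.subset by blast+
  have "?k \<in> W"
    using W g g' by (simp add: subgroup.m_closed subgroup.m_inv_closed)
  moreover have "act h ?k p = p"
  proof -
    have "act h ?k p = act h (inv\<^bsub>Ggrp h n\<^esub> g') (act h g' p)"
      using act_mult[OF inv_closed[OF g'c] gc] eq by simp
    also have "\<dots> = act h (inv\<^bsub>Ggrp h n\<^esub> g' \<otimes>\<^bsub>Ggrp h n\<^esub> g') p"
      using act_mult[OF inv_closed[OF g'c] g'c] by simp
    also have "\<dots> = p"
      using g'c act_one[OF p] by simp
    finally show ?thesis .
  qed
  ultimately have "?k \<in> Sym h \<times> {id}"
    using reg p unfolding regular_def by blast
  moreover have "g' \<otimes>\<^bsub>Ggrp h n\<^esub> ?k = g"
    using gc g'c by (simp add: m_assoc[symmetric])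
  ultimately show ?thesis
    using snd_Ggrp_mult[where x = g' and y = ?k] by auto
qed

lemma symF_antimono_orbit:
  assumes W: "subgroup W (Ggrp h n)" and reg: "regular h n W" and UV: "U \<subseteq> W" "V \<subseteq> W"
    and orb: "\<forall>p\<in>profiles h n. orbit_under h U p \<subseteq> orbit_under h V p"
  shows "symF h n V \<subseteq> symF h n U"
proof
  fix F assume F: "F \<in> symF h n V"
  have "F (act h u p) = snd u \<circ> F p" if p: "p \<in> profiles h n" and u: "u \<in> U" for p u
  proof -
    obtain v where v: "v \<in> V" "act h u p = act h v p"
      using orb p u unfolding orbit_under_def by blast
    then have "snd u = snd v"
      using regular_act_eq_imp_snd_eq[OF W reg p] u UV by (meson subsetD)
    then show ?thesis using F v p unfolding symF_def by auto
  qed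
  then show "F \<in> symF h n U" using F unfolding symF_def by auto
qed

theorem mainTheorem14:
  fixes h n :: nat and U V :: "((nat \<Rightarrow> nat) \<times> (nat \<Rightarrow> nat)) set"
  assumes "h \<ge> 2" and "n \<ge> 2"
    and "subgroup U (Ggrp h n)" and "subgroup V (Ggrp h n)"
    and "regular h n (generate (Ggrp h n) (U \<union> V))"
  shows "((\<forall>p\<in>profiles h n. orbit_under h U p \<subseteq> orbit_under h V p) \<longrightarrow> symF h n V \<subseteq> symF h n U)
       \<and> ((\<forall>p\<in>profiles h n. orbit_under h U p = orbit_under h V p) \<longrightarrow> symF h n V = symF h n U)"
proof -
  let ?W = "generate (Ggrp h n) (U \<union> V)"
  have "U \<union> V \<subseteq> carrier (Ggrp h n)"
    using assms(3,4) by (simp add: subgroup.subset)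
  then have W: "subgroup ?W (Ggrp h n)"
    by (rule group.generate_is_subgroup[OF group_Ggrp])
  have UV: "U \<subseteq> ?W" "V \<subseteq> ?W"
    by (auto intro: generate.incl)
  note antimono = symF_antimono_orbit[OF W assms(5)]
  show ?thesis
  proof (intro conjI impI)
    assume "\<forall>p\<in>profiles h n. orbit_under h U p \<subseteq> orbit_under h V p"
    then show "symF h n V \<subseteq> symF h n U"
      by (rule antimono[OF UV])
  next
    assume "\<forall>p\<in>profiles h n. orbit_under h U p = orbit_under h V p"
    then show "symF h n V = symF h n U"
      using antimono[OF UV] antimono[OF UV(2,1)] by (simp add: subset_antisym)
  qed
qed

end
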